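(* Let $M$ be a matroid on ground set $E$ and let $B_1<B_2<\dots<B_n$ be an ordering of all its bases such that for every $i=1,\dots,n$ there exists a linear functional $\ell_i\in(\mathbb{R}^E)^*$ with $\ell_i(B_j)<\ell_i(B_i)$ if and only if $j<i$. Then this order is a shelling order of $\mathcal{I}(M)$, and the restriction set of each basis $B_i$ is $\mathcal{R}(B_i)=IP_{\ell_i}(B_i)$.
   Context: A linear functional $\ell\in(\mathbb{R}^E)^*$ is identified with a function $\ell:E\to\mathbb{R}$, and $\ell(B)=\sum_{b\in B}\ell(b)$ (equivalently, $\ell$ evaluated at the characteristic vector $\chi_B$). $\mathcal{I}(M)$ is the independence complex of $M$, whose facets are the bases. A shelling order of a pure simplicial complex is a total order $F_1<\dots<F_k$ of its facets such that for each $j\ge2$, $\langle F_1,\dots,F_{j-1}\rangle\cap\langle F_j\rangle$ is pure of dimension one less than the complex; the restriction set $\mathcal{R}(F_j)$ is the unique subset of $F_j$ such that the faces of $\langle F_1,\dots,F_j\rangle$ not in $\langle F_1,\dots,F_{j-1}\rangle$ are exactly the subsets of $F_j$ containing $\mathcal{R}(F_j)$. For a basis $B$, $IP_\ell(B)$ (the internally passive set with respect to the order on $E$ induced by $\ell$) is the set of $b\in B$ for which there is $b'\in E\setminus B$ with $\ell(b')<\ell(b)$ and $(B\setminus\{b\})\cup\{b'\}$ a basis. *)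

theory Defs
  imports Complex_Main
begin

definition matroid_bases :: "'a set \<Rightarrow> 'a set set \<Rightarrow> bool" where
  "matroid_bases E \<B> \<longleftrightarrow> finite E \<and> \<B> \<noteq> {} \<and> (\<forall>B\<in>\<B>. B \<subseteq> E) \<and>
     (\<forall>B1\<in>\<B>. \<forall>B2\<in>\<B>. \<forall>x\<in>B1 - B2. \<exists>y\<in>B2 - B1. insert y (B1 - {x}) \<in> \<B>)"

definition indep_complex :: "'a set set \<Rightarrow> 'a set set" where
  "indep_complex \<B> = {S. \<exists>B\<in>\<B>. S \<subseteq> B}"

definition gen_complex :: "'a set set \<Rightarrow> 'a set set" where
  "gen_complex F = {S. \<exists>B\<in>F. S \<subseteq> B}"

definition facets :: "'a set set \<Rightarrow> 'a set set" where
  "facets K = {F\<in>K. \<forall>G\<in>K. F \<subseteq> G \<longrightarrow> G = F}"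

text \<open>A (finite) complex is pure of dimension d iff it is nonempty and all its
  facets have dimension d, i.e. cardinality d+1. We use cardinalities: pure_card K k
  means pure of dimension k-1.\<close>
definition pure_card :: "'a set set \<Rightarrow> nat \<Rightarrow> bool" where
  "pure_card K k \<longleftrightarrow> K \<noteq> {} \<and> (\<forall>F\<in>facets K. card F = k)"

text \<open>Shelling order (list indices are 0-based; index j \<ge> 1 corresponds to j \<ge> 2
  in the paper): for every j \<ge> 1, the intersection of the complex generated by the
  earlier facets with the simplex of F_j is pure of dimension one less than F_j.\<close>
definition shelling_order :: "'a set list \<Rightarrow> bool" where
  "shelling_order Fs \<longleftrightarrow>
     (\<forall>j. 1 \<le> j \<and> j < length Fs \<longrightarrow>
        pure_card (gen_complex (set (take j Fs)) \<inter> gen_complex {Fs ! j}) (card (Fs ! j) - 1))"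

definition restriction_set :: "'a set list \<Rightarrow> nat \<Rightarrow> 'a set" where
  "restriction_set Fs j = (THE R. R \<subseteq> Fs ! j \<and>
     gen_complex (set (take (Suc j) Fs)) - gen_complex (set (take j Fs))
       = {S. R \<subseteq> S \<and> S \<subseteq> Fs ! j})"

definition IP :: "'a set \<Rightarrow> 'a set set \<Rightarrow> ('a \<Rightarrow> real) \<Rightarrow> 'a set \<Rightarrow> 'a set" where
  "IP E \<B> l B = {b\<in>B. \<exists>b'\<in>E - B. l b' < l b \<and> insert b' (B - {b}) \<in> \<B>}"

end

theory Submission
  imports Defs
begin

text \<open>For \<open>\<ell>\<^sub>i\<close>, the bases preceding \<open>B\<^sub>i\<close> are exactly the bases lighter than \<open>B\<^sub>i\<close>.
  A subset \<open>S\<close> of a basis \<open>B\<close> lies in a lighter basis iff \<open>S\<close> misses an internally passive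
  element: if \<open>b \<in> IP(B) - S\<close>, the lighter basis \<open>B - b + b'\<close> contains \<open>S\<close>; conversely, a basis
  that is heavier than some basis \<open>B'\<close> admits an improving single exchange \<open>B - b + b'\<close> with
  \<open>b \<notin> B'\<close>. Hence the faces of \<open>B\<^sub>i\<close> that are new in the order are those containing
  \<open>IP(B\<^sub>i)\<close>, and the old ones are generated by the codimension-one faces \<open>B\<^sub>i - b\<close>,
  \<open>b \<in> IP(B\<^sub>i)\<close>.\<close>

lemma matroid_bases_finite: "matroid_bases E \<B> \<Longrightarrow> B \<in> \<B> \<Longrightarrow> finite B"
  unfolding matroid_bases_def by (meson finite_subset)

lemma matroid_bases_subset: "matroid_bases E \<B> \<Longrightarrow> B \<in> \<B> \<Longrightarrow> B \<subseteq> E"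
  unfolding matroid_bases_def by blast

lemma matroid_bases_exchange:
  "matroid_bases E \<B> \<Longrightarrow> B1 \<in> \<B> \<Longrightarrow> B2 \<in> \<B> \<Longrightarrow> x \<in> B1 - B2 \<Longrightarrow>
    \<exists>y\<in>B2 - B1. insert y (B1 - {x}) \<in> \<B>"
  unfolding matroid_bases_def by blast

lemma matroid_bases_antichain:
  assumes "matroid_bases E \<B>" "B \<in> \<B>" "B' \<in> \<B>" "B \<subseteq> B'"
  shows "B = B'"
proof (rule ccontr)
  assume "B \<noteq> B'"
  then obtain x where "x \<in> B' - B" using assms(4) by blast
  with matroid_bases_exchange[OF assms(1,3,2)] assms(4) show False by blast
qed

lemma facets_indep_complex: "matroid_bases E \<B> \<Longrightarrow> facets (indep_complex \<B>) = \<B>"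
  unfolding facets_def indep_complex_def using matroid_bases_antichain by blast

lemma sum_exchange:
  fixes l :: "'a \<Rightarrow> real"
  assumes "finite B" "x \<in> B" "y \<notin> B"
  shows "sum l (insert y (B - {x})) = sum l B - l x + l y"
  using assms by (simp add: sum_diff1)

lemma sum_le_if_no_improving_exchange:
  fixes l :: "'a \<Rightarrow> real"
  assumes M: "matroid_bases E \<B>" and B1: "B1 \<in> \<B>"
  shows "B2 \<in> \<B> \<Longrightarrow> \<forall>x\<in>B1 - B2. \<forall>y. y \<notin> B1 \<longrightarrow> insert y (B1 - {x}) \<in> \<B> \<longrightarrow> l x \<le> l y
    \<Longrightarrow> sum l B1 \<le> sum l B2"
proof (induction "card (B2 - B1)" arbitrary: B2 rule: less_induct)
  case (less B2)
  show ?case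
  proof (cases "B2 - B1 = {}")
    case True
    then show ?thesis using matroid_bases_antichain[OF M less.prems(1) B1] by auto
  next
    case False
    txt \<open>Swap the heaviest \<open>x \<in> B2 - B1\<close> out of \<open>B2\<close>; the partner \<open>z\<close> is no heavier,
      because exchanging \<open>z\<close> out of \<open>B1\<close> brings in some \<open>y \<in> B2 - B1\<close> with
      \<open>l z \<le> l y \<le> l x\<close>.\<close>
    have fin: "finite (B2 - B1)" using matroid_bases_finite[OF M less.prems(1)] by simp
    obtain x where x: "x \<in> B2 - B1" and x_max: "\<forall>w\<in>B2 - B1. l w \<le> l x"
    proof -
      have "Max (l ` (B2 - B1)) \<in> l ` (B2 - B1)" using fin False by simp
      then obtain x where "x \<in> B2 - B1" "l x = Max (l ` (B2 - B1))" by auto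
      with fin show thesis using that by simp
    qed
    obtain z where z: "z \<in> B1 - B2" and B2': "insert z (B2 - {x}) \<in> \<B>"
      using matroid_bases_exchange[OF M less.prems(1) B1 x] by blast
    obtain y where y: "y \<in> B2 - B1" and "insert y (B1 - {z}) \<in> \<B>"
      using matroid_bases_exchange[OF M B1 less.prems(1) z] by blast
    then have "l z \<le> l y" using less.prems(2) z by blast
    moreover have "l y \<le> l x" using x_max y by blast
    moreover have "sum l B1 \<le> sum l (insert z (B2 - {x}))"
    proof (rule less.hyps[OF _ B2'])
      have "insert z (B2 - {x}) - B1 = (B2 - B1) - {x}" using z by blast
      then show "card (insert z (B2 - {x}) - B1) < card (B2 - B1)"
        using x fin by (metis card_Diff1_less)
      show "\<forall>x'\<in>B1 - insert z (B2 - {x}). \<forall>y. y \<notin> B1 \<longrightarrow> insert y (B1 - {x'}) \<in> \<B> \<longrightarrow> l x' \<le> l y"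
        using less.prems(2) x by blast
    qed
    moreover have "sum l (insert z (B2 - {x})) = sum l B2 - l x + l z"
      using x z by (intro sum_exchange matroid_bases_finite[OF M less.prems(1)]) auto
    ultimately show ?thesis by linarith
  qed
qed

lemma IP_not_subset_lighter_basis:
  fixes l :: "'a \<Rightarrow> real"
  assumes M: "matroid_bases E \<B>" and "B1 \<in> \<B>" "B2 \<in> \<B>" "sum l B2 < sum l B1"
  shows "\<not> IP E \<B> l B1 \<subseteq> B2"
proof -
  obtain x y where "x \<in> B1 - B2" "y \<notin> B1" "l y < l x" "insert y (B1 - {x}) \<in> \<B>"
    using sum_le_if_no_improving_exchange[OF M assms(2,3), of l] assms(4) by (meson not_le)
  moreover from this have "y \<in> E" using matroid_bases_subset[OF M] by blast
  ultimately show ?thesis unfolding IP_def by blast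
qed

lemma face_of_lighter_basis_iff:
  fixes l :: "'a \<Rightarrow> real"
  assumes M: "matroid_bases E \<B>" and B: "B \<in> \<B>" and S: "S \<subseteq> B"
  shows "S \<in> gen_complex {B'\<in>\<B>. sum l B' < sum l B} \<longleftrightarrow> \<not> IP E \<B> l B \<subseteq> S"
proof
  assume "S \<in> gen_complex {B'\<in>\<B>. sum l B' < sum l B}"
  then obtain B' where "B' \<in> \<B>" "sum l B' < sum l B" "S \<subseteq> B'"
    unfolding gen_complex_def by blast
  then show "\<not> IP E \<B> l B \<subseteq> S" using IP_not_subset_lighter_basis[OF M B] by blast
next
  assume "\<not> IP E \<B> l B \<subseteq> S"
  then obtain b b' where "b \<in> B" "b \<notin> S" "b' \<in> E - B" "l b' < l b"
    and B': "insert b' (B - {b}) \<in> \<B>"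
    unfolding IP_def by blast
  moreover have "finite B" using matroid_bases_finite[OF M B] .
  ultimately have "sum l (insert b' (B - {b})) < sum l B" by (subst sum_exchange) auto
  moreover have "S \<subseteq> insert b' (B - {b})" using S \<open>b \<notin> S\<close> by blast
  ultimately show "S \<in> gen_complex {B'\<in>\<B>. sum l B' < sum l B}"
    unfolding gen_complex_def using B' by blast
qed

lemma set_take_eq_lighter:
  fixes l :: "'a \<Rightarrow> real"
  assumes "i < length Bs" "\<forall>j<length Bs. (sum l (Bs ! j) < sum l (Bs ! i) \<longleftrightarrow> j < i)"
  shows "set (take i Bs) = {B\<in>set Bs. sum l B < sum l (Bs ! i)}"
proof (intro set_eqI iffI)
  have take: "B \<in> set (take i Bs) \<longleftrightarrow> (\<exists>k<i. B = Bs ! k)" for B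
    using assms(1) by (auto simp: in_set_conv_nth)
  fix B
  show "B \<in> set (take i Bs) \<Longrightarrow> B \<in> {B\<in>set Bs. sum l B < sum l (Bs ! i)}"
    using assms unfolding take by auto
  assume "B \<in> {B\<in>set Bs. sum l B < sum l (Bs ! i)}"
  then obtain k where "k < length Bs" "B = Bs ! k" "sum l B < sum l (Bs ! i)"
    by (auto simp: in_set_conv_nth)
  then show "B \<in> set (take i Bs)" using assms unfolding take by auto
qed

lemma pure_card_faces_missing:
  assumes "finite F" "R \<subseteq> F" "R \<noteq> {}"
  shows "pure_card {S. S \<subseteq> F \<and> \<not> R \<subseteq> S} (card F - 1)"
  unfolding pure_card_def
proof (intro conjI ballI)
  show "{S. S \<subseteq> F \<and> \<not> R \<subseteq> S} \<noteq> {}" using assms(3) by blast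
  fix G assume G: "G \<in> facets {S. S \<subseteq> F \<and> \<not> R \<subseteq> S}"
  then obtain x where x: "x \<in> R" "x \<notin> G" and "G \<subseteq> F" unfolding facets_def by blast
  then have "G \<subseteq> F - {x}" by blast
  moreover have "F - {x} \<in> {S. S \<subseteq> F \<and> \<not> R \<subseteq> S}" using x by blast
  ultimately have "G = F - {x}" using G unfolding facets_def by blast
  then show "card G = card F - 1" using x assms(1,2) by auto
qed

lemma gen_complex_singleton: "gen_complex {F} = Pow F"
  unfolding gen_complex_def by blast

lemma gen_complex_take_Suc:
  "j < length Fs \<Longrightarrow> gen_complex (set (take (Suc j) Fs)) - gen_complex (set (take j Fs))
    = {S. S \<subseteq> Fs ! j \<and> S \<notin> gen_complex (set (take j Fs))}"
  by (auto simp: take_Suc_conv_app_nth gen_complex_def)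

lemma restriction_setI:
  assumes "R \<subseteq> Fs ! j"
    and "gen_complex (set (take (Suc j) Fs)) - gen_complex (set (take j Fs))
      = {S. R \<subseteq> S \<and> S \<subseteq> Fs ! j}"
  shows "restriction_set Fs j = R"
  unfolding restriction_set_def
proof (rule the_equality)
  fix R' assume "R' \<subseteq> Fs ! j \<and> gen_complex (set (take (Suc j) Fs)) - gen_complex (set (take j Fs))
      = {S. R' \<subseteq> S \<and> S \<subseteq> Fs ! j}"
  then have "{S. R' \<subseteq> S \<and> S \<subseteq> Fs ! j} = {S. R \<subseteq> S \<and> S \<subseteq> Fs ! j}" "R' \<subseteq> Fs ! j"
    using assms(2) by auto
  then show "R' = R" using assms(1) by blast
qed (use assms in blast)

theorem lemma6p1:
  fixes E :: "'a set" and \<B> :: "'a set set" and Bs :: "'a set list"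
  assumes "matroid_bases E \<B>"
    and "distinct Bs" and "set Bs = \<B>"
    and "\<forall>i<length Bs. \<exists>l :: 'a \<Rightarrow> real. \<forall>j<length Bs.
           ((\<Sum>b\<in>Bs ! j. l b) < (\<Sum>b\<in>Bs ! i. l b) \<longleftrightarrow> j < i)"
  shows "set Bs = facets (indep_complex \<B>) \<and> shelling_order Bs \<and>
         (\<forall>i<length Bs. \<forall>l :: 'a \<Rightarrow> real.
            (\<forall>j<length Bs. ((\<Sum>b\<in>Bs ! j. l b) < (\<Sum>b\<in>Bs ! i. l b) \<longleftrightarrow> j < i))
            \<longrightarrow> restriction_set Bs i = IP E \<B> l (Bs ! i))"
proof (intro conjI)
  note M = assms(1)
  have basis: "Bs ! i \<in> \<B>" if "i < length Bs" for i using that assms(3) by auto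
  have IP_sub: "IP E \<B> l (Bs ! i) \<subseteq> Bs ! i" for l i unfolding IP_def by blast
  have old_face_iff: "S \<in> gen_complex (set (take i Bs)) \<longleftrightarrow> \<not> IP E \<B> l (Bs ! i) \<subseteq> S"
    if "i < length Bs" "\<forall>j<length Bs. (sum l (Bs ! j) < sum l (Bs ! i) \<longleftrightarrow> j < i)" "S \<subseteq> Bs ! i"
    for i S and l :: "'a \<Rightarrow> real"
    using face_of_lighter_basis_iff[OF M basis[OF that(1)] that(3)]
    unfolding set_take_eq_lighter[OF that(1,2)] assms(3) .
  show "set Bs = facets (indep_complex \<B>)" using facets_indep_complex[OF M] assms(3) by simp
  show "shelling_order Bs" unfolding shelling_order_def
  proof (intro allI impI)
    fix j assume j: "1 \<le> j \<and> j < length Bs"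
    then obtain l :: "'a \<Rightarrow> real"
      where l: "\<forall>k<length Bs. (sum l (Bs ! k) < sum l (Bs ! j) \<longleftrightarrow> k < j)"
      using assms(4) by blast
    have "Bs ! 0 \<in> set (take j Bs)" using j by (auto simp: in_set_conv_nth intro!: exI[of _ 0])
    then have "{} \<in> gen_complex (set (take j Bs))" unfolding gen_complex_def by blast
    then have "IP E \<B> l (Bs ! j) \<noteq> {}" using old_face_iff[OF _ l, of "{}"] j by simp
    moreover have "gen_complex (set (take j Bs)) \<inter> gen_complex {Bs ! j}
        = {S. S \<subseteq> Bs ! j \<and> \<not> IP E \<B> l (Bs ! j) \<subseteq> S}"
      using old_face_iff[OF _ l] j unfolding gen_complex_singleton by blast
    ultimately show "pure_card (gen_complex (set (take j Bs)) \<inter> gen_complex {Bs ! j})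
        (card (Bs ! j) - 1)"
      using pure_card_faces_missing[OF matroid_bases_finite[OF M basis] IP_sub] j by simp
  qed
  show "\<forall>i<length Bs. \<forall>l :: 'a \<Rightarrow> real.
            (\<forall>j<length Bs. ((\<Sum>b\<in>Bs ! j. l b) < (\<Sum>b\<in>Bs ! i. l b) \<longleftrightarrow> j < i))
            \<longrightarrow> restriction_set Bs i = IP E \<B> l (Bs ! i)"
  proof (intro allI impI restriction_setI[OF IP_sub])
    fix i and l :: "'a \<Rightarrow> real"
    assume i: "i < length Bs" and l: "\<forall>j<length Bs. (sum l (Bs ! j) < sum l (Bs ! i) \<longleftrightarrow> j < i)"
    show "gen_complex (set (take (Suc i) Bs)) - gen_complex (set (take i Bs))
        = {S. IP E \<B> l (Bs ! i) \<subseteq> S \<and> S \<subseteq> Bs ! i}"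
      unfolding gen_complex_take_Suc[OF i] using old_face_iff[OF i l] by blast
  qed
qed

end
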